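(* Let $A$ be a combinatorially rich set in $(\mathbb{N},+)$. Then (1) $A$ contains a family of $2^\omega$ almost disjoint subsets each of which is combinatorially rich; and (2) $A$ can be split into $\omega$ pairwise disjoint subsets each of which is combinatorially rich.
   Context: $\mathbb{N}=\{1,2,\dots\}$. For $n\in\mathbb{N}$ and a set $X$, $\mathcal{P}_n(X)$ is the set of $n$-element subsets of $X$, and ${}^mX$ is the set of sequences of length $m$ in $X$. For a commutative semigroup $(S,+)$, $L\in\mathcal{P}_n({}^mS)$, $a\in S$ and nonempty $H\subseteq\{1,\dots,m\}$, put $S_L(a,H)=\{a+\sum_{t\in H}f(t): f\in L\}$. A set $A\subseteq S$ is combinatorially rich if there is a sequence $\langle r_n\rangle_{n=1}^\infty$ in $\mathbb{N}$ such that for each $n\in\mathbb{N}$ and each $L\in\mathcal{P}_n({}^{r_n}S)$ there exist $a\in S$ and nonempty $H\subseteq\{1,\dots,r_n\}$ with $S_L(a,H)\subseteq A$. For an infinite set $X$, a family of almost disjoint subsets of $X$ is a family of subsets of $X$ each of cardinality $|X|$ such that any two distinct members intersect in a set of cardinality less than $|X|$. *)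

theory Defs
  imports Main "HOL-Library.FuncSet" "HOL-Library.Equipollence"
begin

text \<open>Sequences of length m in S: extensional functions {1..m} -> S.
  S_L(a,H) for L a set of such sequences.\<close>
definition S_L :: "(nat \<Rightarrow> 'a::comm_monoid_add) set \<Rightarrow> 'a \<Rightarrow> nat set \<Rightarrow> 'a set" where
  "S_L L a H = {a + (\<Sum>t\<in>H. f t) | f. f \<in> L}"

text \<open>Combinatorial richness of A inside the commutative semigroup with carrier S.
  Sums are only taken over nonempty H, so the monoid structure is only notational.\<close>
definition comb_rich :: "'a::comm_monoid_add set \<Rightarrow> 'a set \<Rightarrow> bool" where
  "comb_rich S A \<longleftrightarrow> A \<subseteq> S \<and>
     (\<exists>r :: nat \<Rightarrow> nat. (\<forall>n\<ge>1. r n \<ge> 1) \<and>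
        (\<forall>n\<ge>1. \<forall>L. L \<subseteq> ({1..r n} \<rightarrow>\<^sub>E S) \<and> finite L \<and> card L = n \<longrightarrow>
            (\<exists>a\<in>S. \<exists>H. H \<subseteq> {1..r n} \<and> H \<noteq> {} \<and> S_L L a H \<subseteq> A)))"

definition almost_disjoint_family :: "'a set \<Rightarrow> 'a set set \<Rightarrow> bool" where
  "almost_disjoint_family X F \<longleftrightarrow>
     (\<forall>B\<in>F. B \<subseteq> X \<and> B \<approx> X) \<and>
     (\<forall>B\<in>F. \<forall>C\<in>F. B \<noteq> C \<longrightarrow> B \<inter> C \<prec> X)"

abbreviation Npos :: "nat set" where "Npos \<equiv> {1..}"

end

theory Submission
  imports Defs "HOL-Library.Disjoint_Sets" "HOL-Analysis.Finite_Cartesian_Product"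
begin

text \<open>Fix a sequence \<open>r\<close> witnessing the richness of \<open>A\<close>. Richness with respect to \<open>r\<close> only
  concerns the countably many finite families \<open>L\<close> of positive sequences of length \<open>r |L|\<close>,
  and since every member of \<open>L\<close> may be shifted by a constant \<open>c\<close>, \<open>A\<close> contains for each \<open>L\<close>
  a set \<open>S\<^sub>L(a,H)\<close> lying entirely above \<open>c\<close>. Choosing these sets one after another above
  the previous ones, any countable list of requests \<open>L\<close> is served by pairwise disjoint
  subsets of \<open>A\<close>, and a set serving every \<open>L\<close> is again rich. For the partition, let the
  \<open>i\<close>-th piece serve all \<open>L\<close>; for the almost disjoint family, serve all \<open>L\<close> along every
  level of the binary tree \<open>2\<^sup><\<^sup>\<omega>\<close> and let \<open>B\<^sub>x\<close> collect what lies on the branch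
  \<open>x \<subseteq> \<nat>\<close>: two branches share only finitely many nodes.\<close>

lemma countable_infinite_eqpoll:
  assumes "countable A" "infinite A" "countable B" "infinite B"
  shows "A \<approx> B"
proof -
  obtain f g where "bij_betw f (UNIV :: nat set) A" "bij_betw g (UNIV :: nat set) B"
    using countable_infiniteE' assms by metis
  then show ?thesis
    unfolding eqpoll_def by (meson bij_betw_inv bij_betw_trans)
qed

lemma disjoint_family_extend_to_partition:
  fixes U :: "nat \<Rightarrow> 'a set"
  assumes "disjoint_family U" "\<And>i. U i \<subseteq> A"
  shows "\<exists>P. disjoint_family P \<and> (\<Union>i. P i) = A \<and> (\<forall>i. U i \<subseteq> P i)"
proof -
  define P where "P i = (if i = 0 then U 0 \<union> (A - (\<Union>j. U j)) else U i)" for i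
  have "disjoint_family P"
    using assms(1) unfolding P_def disjoint_family_on_def by auto
  moreover have "(\<Union>i. P i) = A"
    using assms(2) unfolding P_def by (auto split: if_splits; metis)
  moreover have "U i \<subseteq> P i" for i
    unfolding P_def by auto
  ultimately show ?thesis
    by blast
qed

definition test_families :: "(nat \<Rightarrow> nat) \<Rightarrow> (nat \<Rightarrow> nat) set set" where
  "test_families r = {L. finite L \<and> L \<noteq> {} \<and> L \<subseteq> {1..r (card L)} \<rightarrow>\<^sub>E Npos}"

definition patterns :: "(nat \<Rightarrow> nat) \<Rightarrow> (nat \<Rightarrow> nat) set \<Rightarrow> nat set set" where
  "patterns r L = {S_L L a H | a H. a \<in> Npos \<and> H \<subseteq> {1..r (card L)} \<and> H \<noteq> {}}"

definition rich_for :: "(nat \<Rightarrow> nat) \<Rightarrow> nat set \<Rightarrow> bool" where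
  "rich_for r A \<longleftrightarrow> (\<forall>L\<in>test_families r. \<exists>W\<in>patterns r L. W \<subseteq> A)"

lemma rich_for_iff:
  "rich_for r A \<longleftrightarrow> (\<forall>n\<ge>1. \<forall>L. L \<subseteq> ({1..r n} \<rightarrow>\<^sub>E Npos) \<and> finite L \<and> card L = n \<longrightarrow>
      (\<exists>a\<in>Npos. \<exists>H. H \<subseteq> {1..r n} \<and> H \<noteq> {} \<and> S_L L a H \<subseteq> A))"
    (is "_ \<longleftrightarrow> (\<forall>n\<ge>1. \<forall>L. ?test n L \<longrightarrow> ?hit n L)")
proof
  assume rich: "rich_for r A"
  show "\<forall>n\<ge>1. \<forall>L. ?test n L \<longrightarrow> ?hit n L"
  proof (intro allI impI)
    fix n L assume "1 \<le> n" and L: "?test n L"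
    then have "L \<in> test_families r"
      unfolding test_families_def by auto
    then obtain W where "W \<in> patterns r L" "W \<subseteq> A"
      using rich unfolding rich_for_def by blast
    then show "?hit n L"
      using L unfolding patterns_def by blast
  qed
next
  assume hit: "\<forall>n\<ge>1. \<forall>L. ?test n L \<longrightarrow> ?hit n L"
  show "rich_for r A"
    unfolding rich_for_def
  proof
    fix L assume "L \<in> test_families r"
    then have "1 \<le> card L" and "?test (card L) L"
      unfolding test_families_def by (auto simp: Suc_le_eq card_gt_0_iff)
    then obtain a H where "a \<in> Npos" "H \<subseteq> {1..r (card L)}" "H \<noteq> {}" "S_L L a H \<subseteq> A"
      using hit[rule_format, of "card L" L] by blast
    then show "\<exists>W\<in>patterns r L. W \<subseteq> A"
      unfolding patterns_def by blast
  qed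
qed

lemma comb_rich_Npos_iff:
  "comb_rich Npos A \<longleftrightarrow> A \<subseteq> Npos \<and> (\<exists>r. (\<forall>n\<ge>1. 1 \<le> r n) \<and> rich_for r A)"
  by (simp only: comb_rich_def rich_for_iff)

lemma countable_test_families: "countable (test_families r)"
proof (rule countable_subset)
  show "test_families r \<subseteq> (\<Union>m. {L. finite L \<and> L \<subseteq> {1..m} \<rightarrow>\<^sub>E (UNIV :: nat set)})"
    unfolding test_families_def by (auto simp: PiE_def Pi_def)
  show "countable (\<Union>m. {L. finite L \<and> L \<subseteq> {1..m::nat} \<rightarrow>\<^sub>E (UNIV :: nat set)})"
    by (intro countable_UN[of UNIV] countable_Collect_finite_subset countable_PiE) auto
qed

lemma test_families_nonempty: "test_families r \<noteq> {}"
proof -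
  have "{\<lambda>t\<in>{1..r 1}. 1} \<in> test_families r"
    unfolding test_families_def by auto
  then show ?thesis by blast
qed

lemma enumerate_test_families:
  obtains e :: "nat \<Rightarrow> (nat \<Rightarrow> nat) set" where "range e = test_families r"
  using range_from_nat_into[OF test_families_nonempty countable_test_families] by blast

lemma rich_for_enumerated_iff:
  assumes "range e = test_families r"
  shows "rich_for r B \<longleftrightarrow> (\<forall>m. \<exists>W\<in>patterns r (e m). W \<subseteq> B)"
  unfolding rich_for_def assms[symmetric] by simp

lemma patterns_finite_nonempty:
  assumes "L \<in> test_families r" "W \<in> patterns r L"
  shows "finite W" "W \<noteq> {}"
  using assms unfolding test_families_def patterns_def S_L_def
  by (auto simp: setcompr_eq_image)

definition shift :: "nat set \<Rightarrow> nat \<Rightarrow> (nat \<Rightarrow> nat) \<Rightarrow> nat \<Rightarrow> nat" where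
  "shift K c f = (\<lambda>t\<in>K. f t + c)"

lemma sum_shift: "H \<subseteq> K \<Longrightarrow> (\<Sum>t\<in>H. shift K c f t) = (\<Sum>t\<in>H. f t) + c * card H"
  unfolding shift_def by (simp add: subset_iff sum.distrib mult.commute)

lemma S_L_shift: "H \<subseteq> K \<Longrightarrow> S_L (shift K c ` L) a H = S_L L (a + c * card H) H"
  unfolding S_L_def setcompr_eq_image by (simp add: image_image sum_shift ac_simps)

lemma shift_test_family:
  assumes "L \<in> test_families r"
  shows "shift {1..r (card L)} c ` L \<in> test_families r"
    and "card (shift {1..r (card L)} c ` L) = card L"
proof -
  let ?K = "{1..r (card L)}"
  have L: "finite L" "L \<noteq> {}" "L \<subseteq> ?K \<rightarrow>\<^sub>E Npos"
    using assms unfolding test_families_def by auto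
  have "inj_on (shift ?K c) L"
  proof (rule inj_onI)
    fix f g assume fg: "f \<in> L" "g \<in> L" and eq: "shift ?K c f = shift ?K c g"
    have "f t = g t" if "t \<in> ?K" for t
      using fun_cong[OF eq, of t] that by (simp add: shift_def)
    then show "f = g"
      using fg L(3) by (intro PiE_ext[of f ?K "\<lambda>_. Npos" g]) auto
  qed
  then show card: "card (shift ?K c ` L) = card L"
    by (rule card_image)
  have "shift ?K c f \<in> ?K \<rightarrow>\<^sub>E Npos" if "f \<in> L" for f
  proof -
    have "f \<in> ?K \<rightarrow>\<^sub>E Npos"
      using that L(3) by blast
    then show ?thesis
      by (auto simp: shift_def PiE_iff intro: trans_le_add1)
  qed
  then have "shift ?K c ` L \<subseteq> ?K \<rightarrow>\<^sub>E Npos"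
    by blast
  then show "shift ?K c ` L \<in> test_families r"
    using L unfolding test_families_def mem_Collect_eq card by blast
qed

lemma rich_for_pattern_above:
  assumes "rich_for r A" "L \<in> test_families r"
  shows "\<exists>W\<in>patterns r L. W \<subseteq> A \<and> (\<forall>z\<in>W. c < z)"
proof -
  let ?K = "{1..r (card L)}"
  obtain W where "W \<in> patterns r (shift ?K c ` L)" "W \<subseteq> A"
    using assms(1) shift_test_family(1)[OF assms(2)] unfolding rich_for_def by blast
  then obtain a H where a: "a \<in> Npos" and H: "H \<subseteq> ?K" "H \<noteq> {}"
    and sub: "S_L (shift ?K c ` L) a H \<subseteq> A"
    unfolding patterns_def shift_test_family(2)[OF assms(2)] by blast
  have "1 \<le> card H"
    using H finite_subset[OF H(1)] by (simp add: Suc_le_eq card_gt_0_iff)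
  then have "c \<le> c * card H"
    using mult_le_mono2[of 1 "card H" c] by simp
  moreover have "1 \<le> a"
    using a by simp
  ultimately have "c < a + c * card H"
    by linarith
  then have "\<forall>z\<in>S_L L (a + c * card H) H. c < z"
    unfolding S_L_def by auto
  moreover have "a + c * card H \<in> Npos"
    using a by simp
  then have "S_L L (a + c * card H) H \<in> patterns r L"
    using H unfolding patterns_def by blast
  ultimately show ?thesis
    using sub S_L_shift[OF H(1)] by auto
qed

lemma rich_for_disjoint_patterns_seq:
  fixes Q :: "nat \<Rightarrow> (nat \<Rightarrow> nat) set"
  assumes A: "rich_for r A" and Q: "\<And>k. Q k \<in> test_families r"
  obtains V where "\<And>k. V k \<in> patterns r (Q k)" "\<And>k. V k \<subseteq> A" "disjoint_family V"
proof -
  define pick where "pick c k = (SOME W. W \<in> patterns r (Q k) \<and> W \<subseteq> A \<and> (\<forall>z\<in>W. c < z))" for c k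
  have pick: "pick c k \<in> patterns r (Q k) \<and> pick c k \<subseteq> A \<and> (\<forall>z\<in>pick c k. c < z)" for c k
  proof -
    have "\<exists>W. W \<in> patterns r (Q k) \<and> W \<subseteq> A \<and> (\<forall>z\<in>W. c < z)"
      using rich_for_pattern_above[OF A Q] by blast
    then show ?thesis
      unfolding pick_def by (rule someI_ex)
  qed
  \<comment> \<open>\<open>b k\<close> bounds everything picked before step \<open>k\<close>, and step \<open>k\<close> picks above \<open>b k\<close>.\<close>
  define b where "b = rec_nat 0 (\<lambda>k c. Max (pick c k))"
  define V where "V k = pick (b k) k" for k
  have V_fin: "finite (V k)" "V k \<noteq> {}" for k
    using patterns_finite_nonempty[OF Q] pick unfolding V_def by blast+
  have V_bounds: "V k \<subseteq> {b k<..b (Suc k)}" for k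
  proof
    fix z assume z: "z \<in> V k"
    have "b (Suc k) = Max (V k)"
      unfolding b_def V_def by simp
    then have "z \<le> b (Suc k)"
      using Max_ge[OF V_fin(1) z] by simp
    moreover have "b k < z"
      using pick z unfolding V_def by blast
    ultimately show "z \<in> {b k<..b (Suc k)}"
      by simp
  qed
  have "b k < b (Suc k)" for k
    using V_bounds[of k] V_fin(2)[of k] by fastforce
  then have "mono b"
    by (simp add: incseq_SucI less_imp_le)
  have "V j \<inter> V k = {}" if "j < k" for j k
  proof -
    have "b (Suc j) \<le> b k"
      using \<open>mono b\<close> that by (simp add: monoD Suc_leI)
    then show ?thesis
      using V_bounds[of j] V_bounds[of k] by fastforce
  qed
  then have "disjoint_family V"
    unfolding disjoint_family_on_def by (metis inf_commute linorder_neqE_nat)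
  show ?thesis
  proof (rule that)
    show "V k \<in> patterns r (Q k)" "V k \<subseteq> A" for k
      using pick unfolding V_def by blast+
  qed fact
qed

lemma rich_for_disjoint_patterns:
  assumes A: "rich_for r A" and I: "countable I" "I \<noteq> {}"
    and q: "\<And>i. i \<in> I \<Longrightarrow> q i \<in> test_families r"
  shows "\<exists>W. (\<forall>i\<in>I. W i \<in> patterns r (q i) \<and> W i \<subseteq> A) \<and> disjoint_family_on W I"
proof -
  have qI: "q (from_nat_into I k) \<in> test_families r" for k
    using q from_nat_into[OF I(2)] by blast
  obtain V where V: "\<And>k. V k \<in> patterns r (q (from_nat_into I k))" "\<And>k. V k \<subseteq> A"
    and disj: "disjoint_family V"
    using rich_for_disjoint_patterns_seq[where Q = "\<lambda>k. q (from_nat_into I k)", OF A qI] by blast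
  define W where "W i = V (to_nat_on I i)" for i
  have "W i \<in> patterns r (q i)" if "i \<in> I" for i
    using V(1)[of "to_nat_on I i"] I(1) that by (simp add: W_def)
  then have "\<forall>i\<in>I. W i \<in> patterns r (q i) \<and> W i \<subseteq> A"
    using V(2) unfolding W_def by blast
  moreover have "disjoint_family_on W I"
    unfolding disjoint_family_on_def
  proof (intro ballI impI)
    fix i j assume "i \<in> I" "j \<in> I" "i \<noteq> j"
    then have "to_nat_on I i \<noteq> to_nat_on I j"
      using inj_on_to_nat_on[OF I(1)] by (meson inj_on_contraD)
    then show "W i \<inter> W j = {}"
      using disj by (simp add: W_def disjoint_family_on_def)
  qed
  ultimately show ?thesis
    by blast
qed

definition tree_nodes :: "(nat \<times> nat set) set" where
  "tree_nodes = {(m, S). S \<subseteq> {..<m}}"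

definition branch_node :: "nat set \<Rightarrow> nat \<Rightarrow> nat \<times> nat set" where
  "branch_node x m = (m, x \<inter> {..<m})"

definition branch_union :: "(nat \<times> nat set \<Rightarrow> 'a set) \<Rightarrow> nat set \<Rightarrow> 'a set" where
  "branch_union W x = (\<Union>m. W (branch_node x m))"

lemma countable_tree_nodes: "countable tree_nodes"
proof (rule countable_subset)
  show "tree_nodes \<subseteq> (\<Union>m. {m} \<times> Pow {..<m})"
    unfolding tree_nodes_def by auto
  show "countable (\<Union>m. {m} \<times> Pow {..<m::nat})"
    by (rule countable_UN[OF countableI_type]) (intro countable_finite; simp)
qed

lemma branch_node_in_tree_nodes: "branch_node x m \<in> tree_nodes"
  unfolding branch_node_def tree_nodes_def by auto

lemma branch_node_eq_iff:
  "branch_node x m = branch_node y n \<longleftrightarrow> m = n \<and> x \<inter> {..<m} = y \<inter> {..<m}"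
  unfolding branch_node_def by auto

lemma branch_node_differ:
  assumes "i \<in> x \<longleftrightarrow> i \<notin> y" "i < m"
  shows "branch_node x m \<noteq> branch_node y m"
  using assms unfolding branch_node_eq_iff by blast

context
  fixes W :: "nat \<times> nat set \<Rightarrow> 'a set"
  assumes disj: "disjoint_family_on W tree_nodes"
begin

lemma disjoint_on_distinct_branch_nodes:
  "branch_node x m \<noteq> branch_node y n \<Longrightarrow> W (branch_node x m) \<inter> W (branch_node y n) = {}"
  using disj branch_node_in_tree_nodes by (simp add: disjoint_family_on_def)

lemma branch_union_Int_subset:
  assumes "i \<in> x \<longleftrightarrow> i \<notin> y"
  shows "branch_union W x \<inter> branch_union W y \<subseteq> (\<Union>m\<le>i. W (branch_node x m))"
proof
  fix z assume "z \<in> branch_union W x \<inter> branch_union W y"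
  then obtain m n where z: "z \<in> W (branch_node x m)" "z \<in> W (branch_node y n)"
    unfolding branch_union_def by blast
  then have "branch_node x m = branch_node y n"
    using disjoint_on_distinct_branch_nodes by blast
  then have "m \<le> i"
    using branch_node_differ[OF assms] branch_node_eq_iff by (metis not_le)
  then show "z \<in> (\<Union>m\<le>i. W (branch_node x m))"
    using z by blast
qed

lemma finite_branch_union_Int:
  assumes "\<And>v. v \<in> tree_nodes \<Longrightarrow> finite (W v)" "x \<noteq> y"
  shows "finite (branch_union W x \<inter> branch_union W y)"
proof -
  obtain i where i: "i \<in> x \<longleftrightarrow> i \<notin> y"
    using \<open>x \<noteq> y\<close> by blast
  have "finite (\<Union>m\<le>i. W (branch_node x m))"
    by (intro finite_UN_I finite_atMost assms(1) branch_node_in_tree_nodes)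
  then show ?thesis
    using finite_subset[OF branch_union_Int_subset[OF i]] by blast
qed

context
  assumes nonempty: "\<And>v. v \<in> tree_nodes \<Longrightarrow> W v \<noteq> {}"
begin

lemma infinite_branch_union: "infinite (branch_union W x)"
  unfolding branch_union_def
proof (rule infinite_disjoint_family_imp_infinite_UNION)
  show "disjoint_family (\<lambda>m. W (branch_node x m))"
    using disjoint_on_distinct_branch_nodes unfolding disjoint_family_on_def branch_node_eq_iff by blast
qed (use nonempty branch_node_in_tree_nodes in auto)

lemma inj_branch_union: "inj (branch_union W)"
proof (rule injI, rule ccontr)
  fix x y assume eq: "branch_union W x = branch_union W y" and "x \<noteq> y"
  then obtain i where i: "i \<in> x \<longleftrightarrow> i \<notin> y"
    by blast
  obtain z where z: "z \<in> W (branch_node x (Suc i))"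
    using nonempty branch_node_in_tree_nodes by blast
  then have "z \<in> branch_union W x \<inter> branch_union W y"
    using eq unfolding branch_union_def by blast
  then obtain m where "m \<le> i" "z \<in> W (branch_node x m)"
    using branch_union_Int_subset[OF i] by blast
  moreover have "branch_node x m \<noteq> branch_node x (Suc i)"
    using \<open>m \<le> i\<close> by (simp add: branch_node_eq_iff)
  ultimately show False
    using z disjoint_on_distinct_branch_nodes by blast
qed

end

end

lemma comb_rich_almost_disjoint_family:
  assumes "comb_rich Npos A"
  shows "\<exists>F. F \<subseteq> Pow A \<and> almost_disjoint_family A F \<and> F \<approx> (UNIV :: nat set set)
           \<and> (\<forall>B\<in>F. comb_rich Npos B)"
proof -
  obtain r where A: "A \<subseteq> Npos" and r: "\<forall>n\<ge>1. 1 \<le> r n" and rich: "rich_for r A"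
    using assms unfolding comb_rich_Npos_iff by blast
  obtain e :: "nat \<Rightarrow> (nat \<Rightarrow> nat) set" where e: "range e = test_families r"
    by (rule enumerate_test_families)
  have "\<exists>W. (\<forall>v\<in>tree_nodes. W v \<in> patterns r (e (fst v)) \<and> W v \<subseteq> A)
      \<and> disjoint_family_on W tree_nodes"
    using e branch_node_in_tree_nodes
    by (intro rich_for_disjoint_patterns[OF rich countable_tree_nodes]) blast+
  then obtain W where W: "\<And>v. v \<in> tree_nodes \<Longrightarrow> W v \<in> patterns r (e (fst v))"
    "\<And>v. v \<in> tree_nodes \<Longrightarrow> W v \<subseteq> A" and disj: "disjoint_family_on W tree_nodes"
    by blast
  have W_fin: "finite (W v)" "W v \<noteq> {}" if "v \<in> tree_nodes" for v
    using patterns_finite_nonempty[OF _ W(1)[OF that]] e that by blast+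
  have sub: "branch_union W x \<subseteq> A" for x
    unfolding branch_union_def using W(2) branch_node_in_tree_nodes by blast
  have "rich_for r (branch_union W x)" for x
    unfolding rich_for_enumerated_iff[OF e]
  proof
    fix m
    have "W (branch_node x m) \<in> patterns r (e m)"
      using W(1)[OF branch_node_in_tree_nodes] by (simp add: branch_node_def)
    then show "\<exists>W'\<in>patterns r (e m). W' \<subseteq> branch_union W x"
      unfolding branch_union_def by blast
  qed
  then have comb_rich: "comb_rich Npos (branch_union W x)" for x
    unfolding comb_rich_Npos_iff using sub A r by blast
  have infinite: "infinite (branch_union W x)" for x
    using infinite_branch_union[OF disj] W_fin(2) by blast
  then have "infinite A"
    using sub finite_subset by blast
  have "almost_disjoint_family A (range (branch_union W))"
    unfolding almost_disjoint_family_def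
  proof (intro conjI ballI impI)
    fix B assume "B \<in> range (branch_union W)"
    then show "B \<subseteq> A" "B \<approx> A"
      using sub countable_infinite_eqpoll[OF countableI_type infinite countableI_type \<open>infinite A\<close>]
      by auto
  next
    fix B C assume "B \<in> range (branch_union W)" "C \<in> range (branch_union W)" "B \<noteq> C"
    then obtain x y where "B = branch_union W x" "C = branch_union W y" "x \<noteq> y"
      by blast
    then have "finite (B \<inter> C)"
      using finite_branch_union_Int[OF disj W_fin(1)] by simp
    then show "B \<inter> C \<prec> A"
      using finite_lesspoll_infinite \<open>infinite A\<close> by blast
  qed
  moreover have "range (branch_union W) \<approx> (UNIV :: nat set set)"
    using inj_on_image_eqpoll_self[OF inj_branch_union[OF disj]] W_fin(2) by blast
  ultimately show ?thesis
    using sub comb_rich by blast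
qed

lemma comb_rich_partition:
  assumes "comb_rich Npos A"
  shows "\<exists>P :: nat \<Rightarrow> nat set. (\<forall>i j. i \<noteq> j \<longrightarrow> P i \<inter> P j = {}) \<and> (\<Union>i. P i) = A
           \<and> (\<forall>i. comb_rich Npos (P i))"
proof -
  obtain r where A: "A \<subseteq> Npos" and r: "\<forall>n\<ge>1. 1 \<le> r n" and rich: "rich_for r A"
    using assms unfolding comb_rich_Npos_iff by blast
  obtain e :: "nat \<Rightarrow> (nat \<Rightarrow> nat) set" where e: "range e = test_families r"
    by (rule enumerate_test_families)
  have "\<exists>W :: nat \<times> nat \<Rightarrow> nat set.
      (\<forall>v\<in>UNIV. W v \<in> patterns r (e (snd v)) \<and> W v \<subseteq> A) \<and> disjoint_family W"
    by (rule rich_for_disjoint_patterns[OF rich]) (use e in auto)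
  then obtain W :: "nat \<times> nat \<Rightarrow> nat set" where W: "\<And>v. W v \<in> patterns r (e (snd v))"
    "\<And>v. W v \<subseteq> A" and disj: "disjoint_family W"
    by blast
  define U where "U i = (\<Union>m. W (i, m))" for i
  have "disjoint_family U"
    using disj unfolding U_def disjoint_family_on_def by blast
  moreover have "U i \<subseteq> A" for i
    unfolding U_def using W(2) by blast
  ultimately have "\<exists>P. disjoint_family P \<and> (\<Union>i. P i) = A \<and> (\<forall>i. U i \<subseteq> P i)"
    by (rule disjoint_family_extend_to_partition)
  then obtain P :: "nat \<Rightarrow> nat set" where P: "disjoint_family P" "(\<Union>i. P i) = A" "\<And>i. U i \<subseteq> P i"
    by blast
  have "rich_for r (P i)" for i
    unfolding rich_for_enumerated_iff[OF e]
  proof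
    fix m
    have "W (i, m) \<subseteq> P i"
      using P(3)[of i] unfolding U_def by blast
    then show "\<exists>W'\<in>patterns r (e m). W' \<subseteq> P i"
      using W(1)[of "(i, m)"] by auto
  qed
  then have "comb_rich Npos (P i)" for i
    unfolding comb_rich_Npos_iff using P(2) A r by blast
  then show ?thesis
    using P(1,2) unfolding disjoint_family_on_def by blast
qed

theorem theorem3p2:
  fixes A :: "nat set"
  assumes "comb_rich Npos A"
  shows "(\<exists>F. F \<subseteq> Pow A \<and> almost_disjoint_family A F \<and> F \<approx> (UNIV :: nat set set)
              \<and> (\<forall>B\<in>F. comb_rich Npos B))
       \<and> (\<exists>P :: nat \<Rightarrow> nat set. (\<forall>i j. i \<noteq> j \<longrightarrow> P i \<inter> P j = {})
              \<and> (\<Union>i. P i) = A \<and> (\<forall>i. comb_rich Npos (P i)))"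
  using comb_rich_almost_disjoint_family[OF assms] comb_rich_partition[OF assms] by blast

end
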